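(* For $n\ge 0$ let $s_n$ be the number of permutations of $\{1,\dots,n\}$ that are achievable by two stacks in series, and let $t_n$ be the number of achievable permutations $a_1\cdots a_n$ of $\{1,\dots,n\}$ for which there is no $j$ with $a_{j+1}=a_j+1$ (with $s_0=t_0=1$). Let $S(x)=\sum_{n\ge0}s_nx^n$ and $T(x)=\sum_{n\ge0}t_nx^n$. Then $S(x)=T\!\left(\frac{x}{1-x}\right)$, and consequently for every $n\ge1$, $$s_n=\sum_{i=1}^{n}\binom{n-1}{i-1}t_i.$$
   Context: Two stacks in series: a machine with an input stream, a first stack, a second stack and an output stream, with three moves: $\rho$ moves the next element of the input onto the top of the first stack; $\lambda$ moves the top element of the first stack onto the top of the second stack; $\mu$ moves the top element of the second stack to the end of the output. A permutation $q$ of $\{1,\dots,m\}$ is achievable if, starting with input $1,2,\dots,m$ (in this order) and both stacks empty, some finite sequence of these moves ends with empty input, empty stacks, and output equal to $q$. *)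

theory Defs
  imports "HOL-Computational_Algebra.Formal_Power_Series"
begin

text \<open>Configuration of the machine: (input, first stack, second stack, output).
  Stacks are lists whose head is the top element; the output list grows at the end.\<close>
type_synonym config = "nat list \<times> nat list \<times> nat list \<times> nat list"

inductive move :: "config \<Rightarrow> config \<Rightarrow> bool" where
  rho: "move (x # inp, st1, st2, out) (inp, x # st1, st2, out)"
| lambda: "move (inp, y # st1, st2, out) (inp, st1, y # st2, out)"
| mu: "move (inp, st1, z # st2, out) (inp, st1, st2, out @ [z])"

definition achievable :: "nat \<Rightarrow> nat list \<Rightarrow> bool" where
  "achievable m q \<longleftrightarrow> move\<^sup>*\<^sup>* ([1..<m+1], [], [], []) ([], [], [], q)"

definition is_perm :: "nat \<Rightarrow> nat list \<Rightarrow> bool" where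
  "is_perm n q \<longleftrightarrow> distinct q \<and> set q = {1..n}"

definition s_count :: "nat \<Rightarrow> nat" where
  "s_count n = card {q. is_perm n q \<and> achievable n q}"

definition t_count :: "nat \<Rightarrow> nat" where
  "t_count n = card {q. is_perm n q \<and> achievable n q \<and>
      \<not> (\<exists>j. j + 1 < length q \<and> q ! (j + 1) = q ! j + 1)}"

definition S_fps :: "rat fps" where
  "S_fps = Abs_fps (\<lambda>n. of_nat (s_count n))"

definition T_fps :: "rat fps" where
  "T_fps = Abs_fps (\<lambda>n. of_nat (t_count n))"

end

theory Submission
  imports Defs "HOL-Library.Multiset"
begin

text \<open>If an achievable permutation contains the succession \<open>v, v+1\<close>, merging these two
  letters into one and renumbering (\<open>collapse\<close>) yields an achievable permutation of one
  element less, and splitting the letter \<open>v\<close> back into \<open>v, v+1\<close> (\<open>expand\<close>) inverts this: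
  both are letter-to-word substitutions, which the machine simulates move by move.
  Iterating, the achievable permutations of \<open>n\<close> whose set of successions is \<open>G\<close> are in
  bijection with the succession-free ones of \<open>n - |G|\<close>. Summing over
  \<open>G \<subseteq> {1..n-1}\<close> gives \<open>s\<^sub>n = \<Sum>\<^sub>k (n-1 choose k) t\<^bsub>n-k\<^esub>\<close>, and the coefficient
  of \<open>x\<^sup>n\<close> in \<open>(x/(1-x))\<^sup>i\<close> is \<open>(n-1 choose i-1)\<close>.\<close>

lemma push_word: "move\<^sup>*\<^sup>* (w @ inp, st1, st2, out) (inp, rev w @ st1, st2, out)"
proof (induction w arbitrary: st1)
  case (Cons a w)
  have "move (a # w @ inp, st1, st2, out) (w @ inp, a # st1, st2, out)" by (rule move.rho)
  with Cons[of "a # st1"] show ?case by (simp add: converse_rtranclp_into_rtranclp)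
qed simp

lemma transfer_word: "move\<^sup>*\<^sup>* (inp, rev w @ st1, st2, out) (inp, st1, w @ st2, out)"
proof (induction w arbitrary: st1 st2)
  case (Cons a w)
  have "move (inp, a # st1, w @ st2, out) (inp, st1, a # w @ st2, out)" by (rule move.lambda)
  with Cons[of "a # st1" st2] show ?case by (simp add: rtranclp.rtrancl_into_rtrancl)
qed simp

lemma pop_word: "move\<^sup>*\<^sup>* (inp, st1, w @ st2, out) (inp, st1, st2, out @ w)"
proof (induction w arbitrary: out)
  case (Cons a w)
  have "move (inp, st1, a # w @ st2, out) (inp, st1, w @ st2, out @ [a])" by (rule move.mu)
  with Cons[of "out @ [a]"] show ?case by (simp add: converse_rtranclp_into_rtranclp)
qed simp

text \<open>Replacing every letter \<open>x\<close> by a word \<open>g x\<close> turns each move into a sequence of moves;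
  on the first stack the words appear reversed because they are pushed letter by letter.\<close>
definition subst_config :: "(nat \<Rightarrow> nat list) \<Rightarrow> config \<Rightarrow> config" where
  "subst_config g = (\<lambda>(inp, st1, st2, out).
     (concat (map g inp), concat (map (rev \<circ> g) st1), concat (map g st2), concat (map g out)))"

lemma move_subst_config: "move c c' \<Longrightarrow> move\<^sup>*\<^sup>* (subst_config g c) (subst_config g c')"
proof (induction rule: move.induct)
  case (rho x inp st1 st2 out)
  show ?case using push_word[of "g x"] by (simp add: subst_config_def)
next
  case (lambda inp y st1 st2 out)
  show ?case using transfer_word[of _ "g y"] by (simp add: subst_config_def)
next
  case (mu inp st1 z st2 out)
  show ?case using pop_word[of _ _ "g z"] by (simp add: subst_config_def)
qed

lemma moves_subst_config: "move\<^sup>*\<^sup>* c c' \<Longrightarrow> move\<^sup>*\<^sup>* (subst_config g c) (subst_config g c')"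
  by (induction rule: rtranclp_induct) (auto intro: rtranclp_trans move_subst_config)

lemma achievable_concat_map:
  assumes "achievable m q" and "concat (map g [1..<m+1]) = [1..<n+1]"
  shows "achievable n (concat (map g q))"
  using moves_subst_config[OF assms(1)[unfolded achievable_def], of g] assms(2)
  by (simp add: subst_config_def achievable_def)

lemma is_perm_iff_mset: "is_perm n q \<longleftrightarrow> mset q = mset [1..<n+1]"
proof -
  have "set [1..<n+1] = {1..n}" by auto
  then show ?thesis
    unfolding is_perm_def
    by (metis distinct_upt mset_eq_imp_distinct_iff set_eq_iff_mset_eq_distinct set_mset_mset)
qed

lemma is_perm_concat_map:
  assumes "is_perm m q" and "concat (map g [1..<m+1]) = [1..<n+1]"
  shows "is_perm n (concat (map g q))"
proof -
  have "mset (concat (map g xs)) = \<Sum>\<^sub># (image_mset (mset \<circ> g) (mset xs))" for xs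
    by (induction xs) auto
  then show ?thesis using assms by (metis is_perm_iff_mset)
qed

definition achievable_perms :: "nat \<Rightarrow> nat list set" where
  "achievable_perms n = {q. is_perm n q \<and> achievable n q}"

lemma concat_map_achievable_perms:
  assumes "q \<in> achievable_perms m" and "concat (map g [1..<m+1]) = [1..<n+1]"
  shows "concat (map g q) \<in> achievable_perms n"
  using assms achievable_concat_map is_perm_concat_map by (auto simp: achievable_perms_def)

lemma finite_achievable_perms: "finite (achievable_perms n)"
proof (rule finite_subset)
  show "achievable_perms n \<subseteq> {q. set q \<subseteq> {1..n} \<and> length q = n}"
    by (auto simp: achievable_perms_def is_perm_def dest: distinct_card)
qed (rule finite_lists_length_eq, simp)

definition successions :: "nat list \<Rightarrow> nat set" where
  "successions q = {a. (a, Suc a) \<in> set (zip q (tl q))}"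

lemma successions_conv_nth:
  "successions q = {q ! j | j. Suc j < length q \<and> q ! Suc j = Suc (q ! j)}"
proof -
  have "set (zip q (tl q)) = {(q ! j, q ! Suc j) | j. Suc j < length q}"
    by (force simp: set_zip nth_tl)
  then show ?thesis
    unfolding successions_def by auto
qed

lemma successions_empty_iff:
  "successions q = {} \<longleftrightarrow> \<not> (\<exists>j. j + 1 < length q \<and> q ! (j + 1) = q ! j + 1)"
  by (auto simp: successions_conv_nth)

lemma set_zip_tl_subset: "set (zip xs (tl xs)) \<subseteq> set (butlast xs) \<times> set (tl xs)"
  by (induction xs rule: induct_list012) auto

lemma successions_subset: "a \<in> successions q \<Longrightarrow> a \<in> set q \<and> Suc a \<in> set q"
proof -
  assume "a \<in> successions q"
  then obtain j where "Suc j < length q" "q ! j = a" "q ! Suc j = Suc a"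
    by (auto simp: successions_conv_nth)
  then show ?thesis
    using nth_mem[of j q] nth_mem[of "Suc j" q] by simp
qed

lemma successions_singleton [simp]: "successions [x] = {}"
  by (simp add: successions_def)

lemma successions_Cons_Cons: "successions (x # y # ys) =
    (if y = Suc x then {x} else {}) \<union> successions (y # ys)"
  by (auto simp: successions_def)

lemma successions_append_Cons:
  "successions (xs @ c # ys) = successions (xs @ [c]) \<union> successions (c # ys)"
  by (induction xs rule: induct_list012) (auto simp: successions_Cons_Cons)

lemma successions_map:
  assumes "\<And>x y. (x, y) \<in> set (zip xs (tl xs)) \<Longrightarrow> f y = Suc (f x) \<longleftrightarrow> y = Suc x"
  shows "successions (map f xs) = f ` successions xs"
proof -
  have zip: "set (zip (map f xs) (tl (map f xs))) = (\<lambda>(x, y). (f x, f y)) ` set (zip xs (tl xs))"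
    by (simp add: map_tl[symmetric] zip_map_map)
  show ?thesis
  proof (intro set_eqI iffI)
    fix b assume "b \<in> successions (map f xs)"
    then obtain x y where xy: "(x, y) \<in> set (zip xs (tl xs))" "f x = b" "f y = Suc b"
      using zip by (auto simp: successions_def)
    then have "y = Suc x" using assms by blast
    with xy show "b \<in> f ` successions xs" by (auto simp: successions_def)
  next
    fix b assume "b \<in> f ` successions xs"
    then obtain x where x: "(x, Suc x) \<in> set (zip xs (tl xs))" "b = f x"
      by (auto simp: successions_def)
    then have "f (Suc x) = Suc b" using assms by blast
    with x zip show "b \<in> successions (map f xs)"
      unfolding successions_def by force
  qed
qed

lemma successions_decomp:
  assumes "a \<in> successions q"
  obtains xs ys where "q = xs @ a # Suc a # ys"
proof -
  obtain j where j: "Suc j < length q" "q ! j = a" "q ! Suc j = Suc a"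
    using assms by (auto simp: successions_conv_nth)
  then have "q = take j q @ a # Suc a # drop (Suc (Suc j)) q"
    by (metis Cons_nth_drop_Suc Suc_lessD append_take_drop_id)
  then show thesis by (rule that)
qed

lemma in_successions: "a \<in> successions (xs @ a # Suc a # ys)"
  using successions_append_Cons[of xs a "Suc a # ys"] by (simp add: successions_Cons_Cons)

definition shift_down :: "nat \<Rightarrow> nat \<Rightarrow> nat" where
  "shift_down v x = (if v < x then x - 1 else x)"

definition expand :: "nat \<Rightarrow> nat list \<Rightarrow> nat list" where
  "expand v q = concat (map (\<lambda>x. if x = v then [v, Suc v] else if v < x then [Suc x] else [x]) q)"

definition collapse :: "nat \<Rightarrow> nat list \<Rightarrow> nat list" where
  "collapse v q = concat (map (\<lambda>x. if x = Suc v then [] else [shift_down v x]) q)"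

lemma shift_down_Suc_iff:
  "x \<noteq> v \<Longrightarrow> y \<noteq> Suc v \<Longrightarrow> shift_down v y = Suc (shift_down v x) \<longleftrightarrow> y = Suc x"
  by (auto simp: shift_down_def)

lemma inj_on_shift_down: "inj_on (shift_down v) (- {v})"
  by (auto simp: inj_on_def shift_down_def)

lemma expand_append: "expand v (xs @ ys) = expand v xs @ expand v ys"
  by (simp add: expand_def)

lemma expand_Cons_self: "expand v (v # xs) = v # Suc v # expand v xs"
  by (simp add: expand_def)

lemma collapse_avoiding: "Suc v \<notin> set q \<Longrightarrow> collapse v q = map (shift_down v) q"
  by (induction q) (auto simp: collapse_def)

lemma collapse_block: "collapse v (xs @ v # Suc v # ys) = collapse v xs @ v # collapse v ys"
  by (simp add: collapse_def shift_down_def)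

lemma collapse_expand: "collapse v (expand v q) = q"
  by (induction q) (auto simp: collapse_def expand_def shift_down_def)

lemma expand_collapse_avoiding:
  "v \<notin> set q \<Longrightarrow> Suc v \<notin> set q \<Longrightarrow> expand v (collapse v q) = q"
  by (induction q) (auto simp: collapse_def expand_def shift_down_def)

lemma expand_upt:
  assumes "1 \<le> v" "v < n"
  shows "expand v [1..<n] = [1..<n+1]"
proof -
  have below: "expand v xs = xs" if "\<forall>x\<in>set xs. x < v" for xs
    using that by (induction xs) (auto simp: expand_def)
  have above: "expand v xs = map Suc xs" if "\<forall>x\<in>set xs. v < x" for xs
    using that by (induction xs) (auto simp: expand_def)
  have "[1..<n] = [1..<v] @ v # [Suc v..<n]"
    using upt_add_eq_append[of 1 v "n - v"] assms by (simp add: upt_conv_Cons)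
  moreover have "[1..<n+1] = [1..<v] @ v # Suc v # [Suc (Suc v)..<n+1]"
    using upt_add_eq_append[of 1 v "n + 1 - v"] assms by (simp add: upt_conv_Cons)
  ultimately show ?thesis
    using below[of "[1..<v]"] above[of "[Suc v..<n]"]
    by (simp add: expand_append expand_Cons_self map_Suc_upt)
qed

lemma collapse_upt:
  assumes "1 \<le> v" "v < n"
  shows "collapse v [1..<n+1] = [1..<n]"
  by (metis collapse_expand expand_upt[OF assms])

lemma expand_collapse:
  assumes "distinct q" "v \<in> successions q"
  shows "expand v (collapse v q) = q"
proof -
  obtain xs ys where q: "q = xs @ v # Suc v # ys"
    using assms(2) by (rule successions_decomp)
  with assms(1) show ?thesis
    by (simp add: collapse_block expand_append expand_Cons_self expand_collapse_avoiding)
qed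

lemma successions_expand: "v \<in> set q \<Longrightarrow> v \<in> successions (expand v q)"
  by (metis expand_append expand_Cons_self in_successions split_list)

lemma successions_collapse:
  assumes "distinct q" "v \<in> successions q"
  shows "successions (collapse v q) = shift_down v ` (successions q - {v})"
proof -
  obtain xs ys where q: "q = xs @ v # Suc v # ys"
    using assms(2) by (rule successions_decomp)
  define L R where "L = xs @ [v]" and "R = Suc v # ys"
  have dist: "v \<notin> set xs" "Suc v \<notin> set xs" "v \<notin> set ys" "Suc v \<notin> set ys"
    using assms(1) q by auto
  have split: "successions q - {v} = successions L \<union> successions R"
  proof -
    have "successions q = successions L \<union> insert v (successions R)"
      using successions_append_Cons[of xs v R] by (simp add: q L_def R_def successions_Cons_Cons)
    moreover have "v \<notin> successions L" "v \<notin> successions R"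
      using dist by (auto simp: L_def R_def dest: successions_subset)
    ultimately show ?thesis by blast
  qed
  txt \<open>No adjacent pair of \<open>L\<close> starts with \<open>v\<close> and none of \<open>R\<close> ends with \<open>v+1\<close>, so inside
    these two pieces \<open>shift_down v\<close> neither creates nor destroys successions.\<close>
  have map_sh: "successions (map (shift_down v) xs') = shift_down v ` successions xs'"
    if "v \<notin> set (butlast xs')" "Suc v \<notin> set (tl xs')" for xs'
    using that set_zip_tl_subset[of xs'] by (intro successions_map shift_down_Suc_iff) auto
  have sh: "shift_down v v = v" "shift_down v (Suc v) = v"
    by (simp_all add: shift_down_def)
  have "collapse v q = map (shift_down v) xs @ v # map (shift_down v) ys"
    using dist by (simp add: q collapse_block collapse_avoiding)
  then have "successions (collapse v q) =
      successions (map (shift_down v) L) \<union> successions (map (shift_down v) R)"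
    using successions_append_Cons[of "map (shift_down v) xs" v "map (shift_down v) ys"]
    by (simp add: L_def R_def sh)
  also have "\<dots> = shift_down v ` successions L \<union> shift_down v ` successions R"
  proof -
    have "successions (map (shift_down v) L) = shift_down v ` successions L"
      by (rule map_sh) (use dist in \<open>auto simp: L_def tl_append split: list.split\<close>)
    moreover have "successions (map (shift_down v) R) = shift_down v ` successions R"
      by (rule map_sh) (use dist in \<open>auto simp: R_def dest: in_set_butlastD\<close>)
    ultimately show ?thesis by simp
  qed
  also have "\<dots> = shift_down v ` (successions q - {v})"
    by (simp add: split image_Un)
  finally show ?thesis .
qed

lemma expand_in_achievable_perms:
  assumes "q \<in> achievable_perms n" "1 \<le> v" "v \<le> n"
  shows "expand v q \<in> achievable_perms (Suc n)"
  using concat_map_achievable_perms[OF assms(1)] expand_upt[of v "Suc n"] assms(2,3)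
  by (simp add: expand_def)

lemma collapse_in_achievable_perms:
  assumes "q \<in> achievable_perms (Suc n)" "1 \<le> v" "v \<le> n"
  shows "collapse v q \<in> achievable_perms n"
  using concat_map_achievable_perms[OF assms(1)] collapse_upt[of v "Suc n"] assms(2,3)
  by (simp add: collapse_def)

lemma achievable_perms_distinct: "q \<in> achievable_perms n \<Longrightarrow> distinct q"
  and achievable_perms_set: "q \<in> achievable_perms n \<Longrightarrow> set q = {1..n}"
  by (simp_all add: achievable_perms_def is_perm_def)

lemma successions_achievable_perms: "q \<in> achievable_perms n \<Longrightarrow> successions q \<subseteq> {1..<n}"
  by (auto simp: achievable_perms_set dest: successions_subset)

lemma t_count_eq_card_successions_empty:
  "t_count n = card {q \<in> achievable_perms n. successions q = {}}"
  by (simp add: t_count_def achievable_perms_def successions_empty_iff conj_assoc)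

lemma bij_betw_collapse:
  assumes "v \<in> G" "G \<subseteq> {1..<Suc n}"
  shows "bij_betw (collapse v) {q \<in> achievable_perms (Suc n). successions q = G}
           {q \<in> achievable_perms n. successions q = shift_down v ` (G - {v})}"
proof (rule bij_betw_byWitness[where f' = "expand v"])
  have v: "1 \<le> v" "v \<le> n" using assms by auto
  show "\<forall>q \<in> {q \<in> achievable_perms (Suc n). successions q = G}. expand v (collapse v q) = q"
    using assms(1) by (auto intro: expand_collapse achievable_perms_distinct)
  show "\<forall>q \<in> {q \<in> achievable_perms n. successions q = shift_down v ` (G - {v})}.
      collapse v (expand v q) = q"
    by (simp add: collapse_expand)
  show "collapse v ` {q \<in> achievable_perms (Suc n). successions q = G}
      \<subseteq> {q \<in> achievable_perms n. successions q = shift_down v ` (G - {v})}"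
    using assms(1) v
    by (auto intro: collapse_in_achievable_perms
        simp: successions_collapse achievable_perms_distinct)
  show "expand v ` {q \<in> achievable_perms n. successions q = shift_down v ` (G - {v})}
      \<subseteq> {q \<in> achievable_perms (Suc n). successions q = G}"
  proof clarify
    fix q assume q: "q \<in> achievable_perms n" "successions q = shift_down v ` (G - {v})"
    have q_exp: "expand v q \<in> achievable_perms (Suc n)"
      using q(1) v by (rule expand_in_achievable_perms)
    moreover have vs: "v \<in> successions (expand v q)"
      using q(1) v by (intro successions_expand) (auto simp: achievable_perms_set)
    moreover have "shift_down v ` (successions (expand v q) - {v}) = shift_down v ` (G - {v})"
      using successions_collapse[OF achievable_perms_distinct[OF q_exp] vs] q(2)
      by (simp add: collapse_expand)
    then have "successions (expand v q) - {v} = G - {v}"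
      using inj_on_image_eq_iff[OF inj_on_shift_down, of "successions (expand v q) - {v}" v]
      by blast
    ultimately show "expand v q \<in> achievable_perms (Suc n) \<and> successions (expand v q) = G"
      using assms(1) by blast
  qed
qed

lemma card_achievable_perms_with_successions:
  assumes "finite G" "G \<subseteq> {1..<n}"
  shows "card {q \<in> achievable_perms n. successions q = G} = t_count (n - card G)"
  using assms
proof (induction "card G" arbitrary: n G)
  case 0
  then show ?case by (simp add: t_count_eq_card_successions_empty)
next
  case (Suc k)
  then obtain v where v: "v \<in> G" by fastforce
  with Suc.prems obtain m where n: "n = Suc m" by (cases n) auto
  define G' where "G' = shift_down v ` (G - {v})"
  have "inj_on (shift_down v) (G - {v})"
    by (rule inj_on_subset[OF inj_on_shift_down]) blast
  then have "card G' = k"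
    using Suc.hyps(2) Suc.prems(1) v by (simp add: G'_def card_image)
  moreover have "G' \<subseteq> {1..<m}"
  proof -
    have "shift_down v g \<in> {1..<m}" if "g \<in> G - {v}" for g
      using that subsetD[OF Suc.prems(2), of g] subsetD[OF Suc.prems(2) v]
      by (auto simp: shift_down_def n)
    then show ?thesis unfolding G'_def by blast
  qed
  ultimately have "card {q \<in> achievable_perms m. successions q = G'} = t_count (m - k)"
    using Suc.hyps(1) Suc.prems(1) by (simp add: G'_def)
  moreover have "card {q \<in> achievable_perms n. successions q = G} =
      card {q \<in> achievable_perms m. successions q = G'}"
    using bij_betw_collapse[of v G m] v Suc.prems(2) by (simp add: G'_def n bij_betw_same_card)
  ultimately show ?case
    by (simp add: n Suc.hyps(2)[symmetric])
qed

lemma s_count_eq_sum_Pow: "s_count n = (\<Sum>G\<in>Pow {1..<n}. t_count (n - card G))"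
proof -
  have "s_count n = card (achievable_perms n)"
    by (simp add: s_count_def achievable_perms_def)
  also have "\<dots> = (\<Sum>G\<in>Pow {1..<n}. card {q \<in> achievable_perms n. successions q = G})"
  proof -
    have "successions ` achievable_perms n \<subseteq> Pow {1..<n}"
      using successions_achievable_perms by blast
    from sum.group[OF finite_achievable_perms _ this, where h = "\<lambda>_. 1 :: nat"]
    show ?thesis by simp
  qed
  also have "\<dots> = (\<Sum>G\<in>Pow {1..<n}. t_count (n - card G))"
    by (intro sum.cong refl card_achievable_perms_with_successions) (auto intro: finite_subset)
  finally show ?thesis .
qed

lemma sum_Pow_card:
  assumes "finite S"
  shows "(\<Sum>G\<in>Pow S. f (card G)) = (\<Sum>k\<le>card S. of_nat (card S choose k) * f k)"
proof -
  have "(\<Sum>G\<in>Pow S. f (card G)) = (\<Sum>k\<le>card S. \<Sum>G\<in>{G \<in> Pow S. card G = k}. f (card G))"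
    using assms by (intro sum.group[symmetric]) (auto intro: card_mono)
  also have "\<dots> = (\<Sum>k\<le>card S. of_nat (card S choose k) * f k)"
    using n_subsets[OF assms] by (intro sum.cong refl) simp
  finally show ?thesis .
qed

lemma s_count_Suc: "s_count (Suc m) = (\<Sum>j\<le>m. (m choose j) * t_count (Suc j))"
proof -
  have "s_count (Suc m) = (\<Sum>k\<le>m. (m choose k) * t_count (Suc m - k))"
    using s_count_eq_sum_Pow[of "Suc m"] sum_Pow_card[of "{1..<Suc m}" "\<lambda>k. t_count (Suc m - k)"]
    by simp
  also have "\<dots> = (\<Sum>j\<le>m. (m choose (m - j)) * t_count (Suc m - (m - j)))"
    using sum.atLeastAtMost_rev[of "\<lambda>k. (m choose k) * t_count (Suc m - k)" 0 m]
    by (simp add: atLeast0AtMost)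
  also have "\<dots> = (\<Sum>j\<le>m. (m choose j) * t_count (Suc j))"
    by (intro sum.cong refl) (auto simp: binomial_symmetric[symmetric] Suc_diff_le)
  finally show ?thesis .
qed

lemma s_count_0: "s_count 0 = t_count 0"
  using s_count_eq_sum_Pow[of 0] by simp

unbundle fps_syntax

lemma fps_X_div_one_minus_X_power_nth:
  "((fps_X / (1 - fps_X) :: 'a :: field fps) ^ Suc i) $ Suc n = of_nat (n choose i)"
proof -
  define B :: "'a fps" where "B = fps_X / (1 - fps_X)"
  have "B * (1 - fps_X) = fps_X"
    by (simp add: B_def)
  then have B: "B = fps_X + fps_X * B"
    by (simp add: algebra_simps)
  have B0: "B $ 0 = 0"
    using arg_cong[OF B, of "\<lambda>f. f $ 0"] by simp
  have rec: "(B ^ Suc i) $ Suc n = (B ^ i) $ n + (B ^ Suc i) $ n" for i n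
  proof -
    have pow: "B ^ Suc i = fps_X * B ^ i + fps_X * B ^ Suc i"
      using arg_cong[OF B, of "\<lambda>f. f * B ^ i"] by (simp add: distrib_right mult.assoc)
    show ?thesis
      by (subst pow) (simp only: fps_add_nth fps_X_mult_nth, simp)
  qed
  have "(B ^ Suc i) $ Suc n = of_nat (n choose i)" for i
  proof (induction n arbitrary: i)
    case 0
    show ?case
      using rec[of i 0] by (cases i) (simp_all add: fps_nth_power_0 B0 del: power_Suc)
  next
    case (Suc n)
    show ?case
      using rec[of i "Suc n"] Suc.IH[of i] Suc.IH[of "i - 1"]
      by (cases i) (simp_all del: power_Suc)
  qed
  then show ?thesis by (simp add: B_def)
qed

lemma fps_compose_X_div_one_minus_X_nth:
  fixes F :: "'a :: field fps"
  shows "(F oo (fps_X / (1 - fps_X))) $ Suc n = (\<Sum>j\<le>n. of_nat (n choose j) * F $ Suc j)"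
  unfolding fps_compose_nth atLeast0AtMost sum.atMost_Suc_shift
  by (simp add: fps_X_div_one_minus_X_power_nth mult.commute del: power_Suc)

theorem mainTheorem2:
  shows "S_fps = T_fps oo (fps_X / (1 - fps_X))
         \<and> (\<forall>n\<ge>1. s_count n = (\<Sum>i=1..n. ((n - 1) choose (i - 1)) * t_count i))"
proof
  show "S_fps = T_fps oo (fps_X / (1 - fps_X))"
  proof (rule fps_ext)
    fix n
    show "S_fps $ n = (T_fps oo (fps_X / (1 - fps_X))) $ n"
      by (cases n) (simp_all add: S_fps_def T_fps_def s_count_0 s_count_Suc
          fps_compose_X_div_one_minus_X_nth)
  qed
  show "\<forall>n\<ge>1. s_count n = (\<Sum>i=1..n. ((n - 1) choose (i - 1)) * t_count i)"
  proof (intro allI impI)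
    fix n :: nat assume "1 \<le> n"
    then obtain m where n: "n = Suc m" by (cases n) auto
    show "s_count n = (\<Sum>i=1..n. ((n - 1) choose (i - 1)) * t_count i)"
      unfolding n s_count_Suc One_nat_def sum.atLeast_Suc_atMost_Suc_shift atLeast0AtMost
      by simp
  qed
qed

end
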